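(* Let $E\in\mathbb{R}^{n\times n}$. If there exists a diagonal positive definite matrix $P\in\mathbb{R}^{n\times n}$ such that $$E^\top P+PE-2P\prec 0,$$ then $E\in\mathbb{B}_\Theta$, i.e. $\operatorname{rank}(I_n-\Theta E)=n$ for every diagonal positive definite matrix $\Theta\in\mathbb{R}^{n\times n}$ with $\Theta\preceq I_n$.
   Context: For a square matrix $E\in\mathbb{R}^{n\times n}$, we write $E\in\mathbb{B}_\Theta$ if $\operatorname{rank}(I_n-\Theta E)=n$ for all diagonal positive definite $\Theta\in\mathbb{R}^{n\times n}$ satisfying $\Theta\preceq I_n$. The notation $\prec 0$, $\preceq$ refers to the Loewner order on symmetric matrices. *)

theory Defs
  imports "HOL-Analysis.Analysis"
begin

definition diagonal_mat :: "real^'n^'n \<Rightarrow> bool" where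
  "diagonal_mat A \<longleftrightarrow> (\<forall>i j. i \<noteq> j \<longrightarrow> A $ i $ j = 0)"

definition symmetric_mat :: "real^'n^'n \<Rightarrow> bool" where
  "symmetric_mat A \<longleftrightarrow> transpose A = A"

definition pos_def :: "real^'n^'n \<Rightarrow> bool" where
  "pos_def A \<longleftrightarrow> symmetric_mat A \<and> (\<forall>x. x \<noteq> 0 \<longrightarrow> x \<bullet> (A *v x) > 0)"

definition pos_semidef :: "real^'n^'n \<Rightarrow> bool" where
  "pos_semidef A \<longleftrightarrow> symmetric_mat A \<and> (\<forall>x. x \<bullet> (A *v x) \<ge> 0)"

definition loewner_lt :: "real^'n^'n \<Rightarrow> real^'n^'n \<Rightarrow> bool" where
  "loewner_lt A B \<longleftrightarrow> symmetric_mat A \<and> symmetric_mat B \<and> pos_def (B - A)"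

definition loewner_le :: "real^'n^'n \<Rightarrow> real^'n^'n \<Rightarrow> bool" where
  "loewner_le A B \<longleftrightarrow> symmetric_mat A \<and> symmetric_mat B \<and> pos_semidef (B - A)"

definition B_Theta :: "real^'n^'n \<Rightarrow> bool" where
  "B_Theta E \<longleftrightarrow> (\<forall>\<Theta>::real^'n^'n. diagonal_mat \<Theta> \<and> pos_def \<Theta> \<and> loewner_le \<Theta> (mat 1)
       \<longrightarrow> rank (mat 1 - \<Theta> ** E) = CARD('n))"

end

theory Submission
  imports Defs
begin

text \<open>Suppose \<open>(I - \<Theta>E) x = 0\<close> and put \<open>y = E x\<close>, so that \<open>x = \<Theta> y\<close>. Since
  \<open>P = diag p\<close> and \<open>\<Theta> = diag \<theta>\<close> are diagonal, the quadratic form of \<open>E\<^sup>T P + P E - 2 P\<close>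
  at \<open>x\<close> equals \<open>2 (y \<bullet> P x - x \<bullet> P x) = 2 \<Sum>\<^sub>i p\<^sub>i \<theta>\<^sub>i (1 - \<theta>\<^sub>i) y\<^sub>i\<^sup>2\<close>, which is
  nonnegative because \<open>0 < \<theta>\<^sub>i \<le> 1\<close>. Negative definiteness therefore forces \<open>x = 0\<close>,
  i.e. \<open>I - \<Theta>E\<close> has trivial kernel and full rank.\<close>

lemma inner_axis_matrix_vector_axis:
  fixes A :: "real^'n^'n"
  shows "axis i 1 \<bullet> (A *v axis i 1) = A $ i $ i"
proof -
  have "(A *v axis i 1) $ i = (\<Sum>j\<in>UNIV. A $ i $ j * (if j = i then 1 else 0))"
    by (simp add: matrix_vector_mult_def axis_def)
  then show ?thesis
    by (simp add: inner_axis' if_distrib cong: if_cong)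
qed

lemma pos_def_diag_pos: "pos_def A \<Longrightarrow> A $ i $ i > 0"
  using inner_axis_matrix_vector_axis[of i A]
  by (metis axis_eq_0_iff pos_def_def zero_neq_one)

lemma pos_semidef_diag_nonneg: "pos_semidef A \<Longrightarrow> A $ i $ i \<ge> 0"
  using inner_axis_matrix_vector_axis[of i A] by (metis pos_semidef_def)

lemma loewner_le_one_diag_le_one: "loewner_le A (mat 1) \<Longrightarrow> A $ i $ i \<le> 1"
  using pos_semidef_diag_nonneg[of "mat 1 - A" i] by (simp add: loewner_le_def mat_def)

lemma loewner_lt_zero_quadratic_neg:
  assumes "loewner_lt A 0" "x \<noteq> 0"
  shows "x \<bullet> (A *v x) < 0"
proof -
  have "x \<bullet> ((0 - A) *v x) > 0"
    using assms unfolding loewner_lt_def pos_def_def by blast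
  moreover have "(0 - A) *v x = - (A *v x)"
    by (simp add: vec_eq_iff matrix_vector_mult_def sum_negf)
  ultimately show ?thesis
    by simp
qed

lemma diagonal_mat_mult_vector:
  assumes "diagonal_mat P"
  shows "(P *v v) $ i = P $ i $ i * v $ i"
proof -
  have "(P *v v) $ i = (\<Sum>j\<in>UNIV. P $ i $ j * v $ j)"
    by (simp add: matrix_vector_mult_def)
  also have "\<dots> = P $ i $ i * v $ i"
    by (subst sum.remove[of UNIV i]) (use assms in \<open>auto simp: diagonal_mat_def\<close>)
  finally show ?thesis .
qed

lemma quadratic_form_lyapunov:
  fixes E P :: "real^'n^'n"
  assumes "symmetric_mat P"
  shows "x \<bullet> ((transpose E ** P + P ** E - 2 *\<^sub>R P) *v x)
           = 2 * ((E *v x) \<bullet> (P *v x) - x \<bullet> (P *v x))"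
proof -
  have "x \<bullet> ((transpose E ** P) *v x) = (E *v x) \<bullet> (P *v x)"
    by (simp only: matrix_vector_mul_assoc[symmetric] dot_lmul_matrix[symmetric]
        vector_transpose_matrix)
  moreover have "x \<bullet> ((P ** E) *v x) = (E *v x) \<bullet> (P *v x)"
  proof -
    have "x \<bullet> ((P ** E) *v x) = (x v* P) \<bullet> (E *v x)"
      by (simp only: dot_lmul_matrix matrix_vector_mul_assoc)
    also have "x v* P = P *v x"
      using assms unfolding symmetric_mat_def by (metis vector_transpose_matrix)
    finally show ?thesis
      by (simp add: inner_commute)
  qed
  ultimately show ?thesis
    by (simp add: matrix_vector_mult_add_rdistrib matrix_vector_mult_diff_rdistrib
        inner_add_right inner_diff_right scaleR_matrix_vector_assoc[symmetric])
qed

text \<open>Termwise this is \<open>p\<^sub>i \<theta>\<^sub>i\<^sup>2 y\<^sub>i\<^sup>2 \<le> p\<^sub>i \<theta>\<^sub>i y\<^sub>i\<^sup>2\<close>.\<close>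
lemma diagonal_contraction_quadratic_le:
  fixes P \<Theta> :: "real^'n^'n"
  assumes "diagonal_mat P" "diagonal_mat \<Theta>"
    and "\<And>i. P $ i $ i \<ge> 0" "\<And>i. 0 \<le> \<Theta> $ i $ i" "\<And>i. \<Theta> $ i $ i \<le> 1"
  shows "(\<Theta> *v y) \<bullet> (P *v (\<Theta> *v y)) \<le> y \<bullet> (P *v (\<Theta> *v y))"
proof -
  have "P$i$i * (\<Theta>$i$i * y$i) * (\<Theta>$i$i * y$i) \<le> P$i$i * (\<Theta>$i$i * y$i) * y$i" for i
  proof -
    have "\<Theta>$i$i * \<Theta>$i$i \<le> \<Theta>$i$i"
      by (rule mult_left_le[OF assms(5,4)])
    then have "P$i$i * (\<Theta>$i$i * \<Theta>$i$i) * (y$i * y$i) \<le> P$i$i * \<Theta>$i$i * (y$i * y$i)"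
      using assms(3) by (intro mult_right_mono mult_left_mono) auto
    then show ?thesis
      by (simp add: algebra_simps)
  qed
  then show ?thesis
    by (simp add: inner_vec_def diagonal_mat_mult_vector[OF assms(1)]
        diagonal_mat_mult_vector[OF assms(2)] sum_mono algebra_simps)
qed

lemma lyapunov_form_nonneg_on_kernel:
  fixes E P \<Theta> :: "real^'n^'n"
  assumes "diagonal_mat P" "symmetric_mat P" "diagonal_mat \<Theta>"
    and "\<And>i. P $ i $ i \<ge> 0" "\<And>i. 0 \<le> \<Theta> $ i $ i" "\<And>i. \<Theta> $ i $ i \<le> 1"
    and "(mat 1 - \<Theta> ** E) *v x = 0"
  shows "x \<bullet> ((transpose E ** P + P ** E - 2 *\<^sub>R P) *v x) \<ge> 0"
proof -
  have x: "x = \<Theta> *v (E *v x)"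
    using assms(7) by (simp add: matrix_vector_mult_diff_rdistrib matrix_vector_mul_assoc)
  have "x \<bullet> (P *v x) \<le> (E *v x) \<bullet> (P *v x)"
    using diagonal_contraction_quadratic_le[OF assms(1,3-6), of "E *v x"] x by simp
  then show ?thesis
    by (simp add: quadratic_form_lyapunov[OF assms(2)])
qed

theorem lemma1:
  fixes E :: "real^'n^'n"
  assumes "\<exists>P::real^'n^'n. diagonal_mat P \<and> pos_def P \<and>
             loewner_lt (transpose E ** P + P ** E - 2 *\<^sub>R P) 0"
  shows "B_Theta E"
  unfolding B_Theta_def
proof (intro allI impI)
  fix \<Theta> :: "real^'n^'n"
  assume \<Theta>: "diagonal_mat \<Theta> \<and> pos_def \<Theta> \<and> loewner_le \<Theta> (mat 1)"
  obtain P :: "real^'n^'n" where P: "diagonal_mat P" "pos_def P"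
    and neg: "loewner_lt (transpose E ** P + P ** E - 2 *\<^sub>R P) 0"
    using assms by blast
  have "x = 0" if "(mat 1 - \<Theta> ** E) *v x = 0" for x
  proof (rule ccontr)
    assume "x \<noteq> 0"
    then have "x \<bullet> ((transpose E ** P + P ** E - 2 *\<^sub>R P) *v x) < 0"
      by (rule loewner_lt_zero_quadratic_neg[OF neg])
    moreover have "x \<bullet> ((transpose E ** P + P ** E - 2 *\<^sub>R P) *v x) \<ge> 0"
      using P \<Theta> that pos_def_diag_pos loewner_le_one_diag_le_one
      by (intro lyapunov_form_nonneg_on_kernel) (auto simp: pos_def_def less_imp_le)
    ultimately show False
      by simp
  qed
  then show "rank (mat 1 - \<Theta> ** E) = CARD('n)"
    using matrix_nonfull_linear_equations_eq by blast
qed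

end
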